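(* Let $P,Q$ be probability distributions on the same finite sample space with $S(P\|Q)\le c$. Then for all $r>1$ there exist probability distributions $P',P''$ on that sample space such that $\|P-P'\|_1\le \frac{2}{r}$ and $Q=\alpha P'+(1-\alpha)P''$, where $\alpha:=\frac{r-1}{r\,2^{r(c+1)}}$.
   Context: $S(P\|Q):=\sum_i P(i)\log_2\frac{P(i)}{Q(i)}$ is the relative entropy, and $\|P-P'\|_1:=\sum_i|P(i)-P'(i)|$ is the total variation distance. *)

theory Defs
  imports "HOL-Analysis.Analysis" "HOL-Library.Extended_Real"
begin

definition is_distr :: "('a::finite \<Rightarrow> real) \<Rightarrow> bool" where
  "is_distr P \<longleftrightarrow> (\<forall>i. P i \<ge> 0) \<and> (\<Sum>i\<in>UNIV. P i) = 1"

definition rel_entropy :: "('a::finite \<Rightarrow> real) \<Rightarrow> ('a \<Rightarrow> real) \<Rightarrow> ereal" where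
  "rel_entropy P Q =
     (if \<exists>i. P i > 0 \<and> Q i = 0 then \<infinity>
      else ereal (\<Sum>i\<in>{i. P i > 0}. P i * log 2 (P i / Q i)))"

definition tv_norm :: "('a::finite \<Rightarrow> real) \<Rightarrow> ('a \<Rightarrow> real) \<Rightarrow> real" where
  "tv_norm P P' = (\<Sum>i\<in>UNIV. \<bar>P i - P' i\<bar>)"

end

theory Submission
  imports Defs
begin

text \<open>Let \<open>K = 2 powr (r (c + 1))\<close> and let \<open>B\<close> be the set where the likelihood ratio
  \<open>P i / Q i\<close> exceeds \<open>K\<close>. On \<open>B\<close> each term of the relative entropy exceeds \<open>P i r (c + 1)\<close>,
  while the remaining terms sum to at least \<open>-1\<close>; hence \<open>P(B) \<le> 1/r\<close>. Conditioning \<open>P\<close> on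
  the complement of \<open>B\<close> moves it by \<open>2 P(B) \<le> 2/r\<close> in total variation, and the conditioned
  distribution is bounded by \<open>K Q / (1 - P(B))\<close>, so \<open>\<alpha>\<close> times it is dominated by \<open>Q\<close>; the
  rest of \<open>Q\<close>, rescaled, is the distribution \<open>P''\<close>.\<close>

definition cond_distr :: "('a::finite \<Rightarrow> real) \<Rightarrow> 'a set \<Rightarrow> 'a \<Rightarrow> real" where
  "cond_distr P S i = (if i \<in> S then P i / sum P S else 0)"

lemma is_distr_cond_distr:
  assumes "is_distr P" and "sum P S > 0"
  shows "is_distr (cond_distr P S)"
proof -
  have "(\<Sum>i\<in>UNIV. cond_distr P S i) = (\<Sum>i\<in>S. P i / sum P S)"
    by (simp add: cond_distr_def sum.If_cases)
  also have "\<dots> = 1"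
    using assms(2) by (simp add: sum_divide_distrib[symmetric])
  finally show ?thesis
    using assms by (auto simp: is_distr_def cond_distr_def)
qed

lemma sum_Compl_distr:
  assumes "is_distr P"
  shows "sum P (- S) = 1 - sum P S"
  using assms sum.subset_diff[of S UNIV P] by (simp add: is_distr_def Compl_eq_Diff_UNIV)

lemma tv_norm_cond_distr:
  assumes "is_distr P" and "sum P S > 0"
  shows "tv_norm P (cond_distr P S) = 2 * (1 - sum P S)"
proof -
  have P0: "\<And>i. P i \<ge> 0" and P1: "sum P UNIV = 1"
    using assms(1) by (auto simp: is_distr_def)
  have "sum P S \<le> 1"
    using P1 sum_mono2[of UNIV S P] P0 by auto
  have "\<bar>P i - P i / sum P S\<bar> = P i / sum P S - P i" if "i \<in> S" for i
  proof -
    have "P i * sum P S \<le> P i"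
      using P0 \<open>sum P S \<le> 1\<close> by (simp add: mult_left_le)
    hence "P i \<le> P i / sum P S"
      using assms(2) by (simp add: le_divide_eq)
    thus ?thesis by simp
  qed
  hence "tv_norm P (cond_distr P S) = (\<Sum>i\<in>S. P i / sum P S - P i) + sum P (- S)"
    unfolding tv_norm_def cond_distr_def using P0
    by (simp add: if_distrib[of "\<lambda>x. \<bar>P _ - x\<bar>"] sum.If_cases Compl_eq_Diff_UNIV)
  also have "\<dots> = 2 * (1 - sum P S)"
    using assms(2) sum_Compl_distr[OF assms(1)] by (simp add: sum_subtractf sum_divide_distrib[symmetric])
  finally show ?thesis .
qed

lemma cond_distr_le_ratio_bound:
  assumes "\<forall>i\<in>S. P i \<le> K * Q i" and "K > 0" and "sum P S > 0" and "\<forall>i. Q i \<ge> 0"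
  shows "sum P S / K * cond_distr P S i \<le> Q i"
  using assms by (cases "i \<in> S") (auto simp: cond_distr_def field_simps)

lemma ex_mixture_decomposition:
  assumes "is_distr Q" and "is_distr P'" and "\<alpha> < 1" and "\<forall>i. \<alpha> * P' i \<le> Q i"
  shows "\<exists>P''. is_distr P'' \<and> (\<forall>i. Q i = \<alpha> * P' i + (1 - \<alpha>) * P'' i)"
proof -
  define P'' where "P'' i = (Q i - \<alpha> * P' i) / (1 - \<alpha>)" for i
  have "sum P'' UNIV = (sum Q UNIV - \<alpha> * sum P' UNIV) / (1 - \<alpha>)"
    by (simp add: P''_def sum_divide_distrib[symmetric] sum_subtractf sum_distrib_left)
  hence "is_distr P''"
    using assms by (simp add: is_distr_def P''_def)
  moreover have "\<forall>i. Q i = \<alpha> * P' i + (1 - \<alpha>) * P'' i"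
    using assms(3) by (simp add: P''_def)
  ultimately show ?thesis by blast
qed

lemma mult_log2_div_ge_neg:
  fixes p q :: real
  assumes "p > 0" and "q > 0"
  shows "- q \<le> p * log 2 (p / q)"
proof -
  \<comment> \<open>\<open>ln x \<ge> 1 - 1/x\<close> at \<open>x = 2p/q\<close> rather than \<open>p/q\<close>: this gains \<open>p (1 - ln 2) \<ge> 0\<close>.\<close>
  have "1 - q / (2 * p) \<le> ln (2 * p / q)"
    using ln_le_minus_one[of "q / (2 * p)"] assms by (simp add: ln_div)
  hence "p - q / 2 \<le> p * ln (2 * p / q)"
    using mult_left_mono[of _ _ p] assms by (fastforce simp: right_diff_distrib)
  moreover have "ln (2 * p / q) = ln 2 + ln (p / q)"
    using assms ln_mult[of 2 "p / q"] by simp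
  moreover have "p * ln 2 \<le> p"
    using ln_2_less_1 assms by simp
  ultimately have "- q / 2 \<le> p * ln (p / q)"
    by (simp add: algebra_simps)
  moreover have "1 / 2 \<le> ln (2::real)"
    using ln_le_minus_one[of "1 / 2"] by (simp add: ln_div)
  hence "0 \<le> q * (ln 2 - 1 / 2)"
    using assms by simp
  ultimately have "- (q * ln 2) \<le> p * ln (p / q)"
    by (simp add: algebra_simps)
  thus ?thesis
    using assms by (simp add: log_def field_simps)
qed

lemma rel_entropy_le_ereal_D:
  assumes "\<forall>i. Q i \<ge> 0" and "rel_entropy P Q \<le> ereal c"
  shows "\<forall>i. P i > 0 \<longrightarrow> Q i > 0"
    and "(\<Sum>i | P i > 0. P i * log 2 (P i / Q i)) \<le> c"
  using assms by (auto simp: rel_entropy_def less_le split: if_splits)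

lemma partial_rel_entropy_ge_minus_one:
  assumes "is_distr Q" and "\<forall>i\<in>S. P i > 0 \<and> Q i > 0"
  shows "-1 \<le> (\<Sum>i\<in>S. P i * log 2 (P i / Q i))"
proof -
  have "- sum Q UNIV \<le> - sum Q S"
    using assms(1) sum_mono2[of UNIV S Q] by (auto simp: is_distr_def)
  also have "\<dots> \<le> (\<Sum>i\<in>S. P i * log 2 (P i / Q i))"
    using assms(2) mult_log2_div_ge_neg by (auto simp: sum_negf[symmetric] intro: sum_mono)
  finally show ?thesis
    using assms(1) by (simp add: is_distr_def)
qed

lemma rel_entropy_le_ereal_ge_minus_one:
  assumes "is_distr Q" and "rel_entropy P Q \<le> ereal c"
  shows "-1 \<le> c"
  using partial_rel_entropy_ge_minus_one[OF assms(1), of "{i. P i > 0}" P]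
    rel_entropy_le_ereal_D[of Q P c] assms by (auto simp: is_distr_def)

lemma mass_above_likelihood_ratio:
  assumes "is_distr P" and "is_distr Q" and "rel_entropy P Q \<le> ereal c"
    and B: "B = {i. 2 powr t * Q i < P i}" and "B \<noteq> {}"
  shows "t * sum P B < c + 1"
proof -
  let ?f = "\<lambda>i. P i * log 2 (P i / Q i)"
  define A where "A = {i. P i > 0}"
  have Q0: "\<forall>i. Q i \<ge> 0"
    using assms(2) by (simp add: is_distr_def)
  note support = rel_entropy_le_ereal_D[OF Q0 assms(3)]
  have BA: "B \<subseteq> A"
    using Q0 by (auto simp: B A_def intro: le_less_trans[rotated])
  have "t * sum P B = (\<Sum>i\<in>B. P i * t)"
    by (simp add: sum_distrib_left mult.commute)
  also have "\<dots> < sum ?f B"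
  proof (rule sum_strict_mono)
    fix i assume "i \<in> B"
    hence "P i > 0" "Q i > 0" "2 powr t < P i / Q i"
      using BA support(1) by (auto simp: A_def B field_simps)
    hence "t < log 2 (P i / Q i)"
      by (metis less_log_iff one_less_numeral_iff semiring_norm(76) zero_less_divide_iff)
    thus "P i * t < ?f i"
      using \<open>P i > 0\<close> by simp
  qed (use assms(5) in auto)
  also have "\<dots> \<le> sum ?f A + 1"
    using partial_rel_entropy_ge_minus_one[OF assms(2), of "A - B" P] support(1)
      sum.subset_diff[OF BA, of ?f] by (auto simp: A_def)
  also have "\<dots> \<le> c + 1"
    using support(2) by (simp add: A_def)
  finally show ?thesis .
qed

lemma mass_above_ratio_bound_lt_one:
  assumes "is_distr P" and "is_distr Q" and "rel_entropy P Q \<le> ereal c" and "r > 1"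
  shows "r * sum P {i. 2 powr (r * (c + 1)) * Q i < P i} < 1"
proof (cases "{i. 2 powr (r * (c + 1)) * Q i < P i} = {}")
  case False
  hence "r * (c + 1) * sum P {i. 2 powr (r * (c + 1)) * Q i < P i} < c + 1"
    by (rule mass_above_likelihood_ratio[OF assms(1-3) refl])
  hence "(c + 1) * (r * sum P {i. 2 powr (r * (c + 1)) * Q i < P i}) < (c + 1) * 1"
    by (simp add: mult_ac)
  moreover have "-1 \<le> c"
    using rel_entropy_le_ereal_ge_minus_one assms(2,3) .
  ultimately show ?thesis
    using mult_less_cancel_left[of "c + 1" _ 1] by fastforce
qed simp

theorem mainTheorem3:
  fixes P Q :: "'a::finite \<Rightarrow> real" and c r :: real
  assumes "is_distr P" and "is_distr Q"
    and "rel_entropy P Q \<le> ereal c"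
    and "r > 1"
  shows "\<exists>P' P''. is_distr P' \<and> is_distr P'' \<and> tv_norm P P' \<le> 2 / r \<and>
     (let \<alpha> = (r - 1) / (r * 2 powr (r * (c + 1)))
      in \<forall>i. Q i = \<alpha> * P' i + (1 - \<alpha>) * P'' i)"
proof -
  define K where "K = 2 powr (r * (c + 1))"
  define B where "B = {i. K * Q i < P i}"
  define \<alpha> where "\<alpha> = (r - 1) / (r * K)"
  have "-1 \<le> c"
    using rel_entropy_le_ereal_ge_minus_one assms(2,3) .
  have "r * sum P B < 1"
    using mass_above_ratio_bound_lt_one[OF assms] by (simp add: B_def K_def)
  hence "sum P B < 1 / r" and "1 / r < 1"
    using assms(4) by (simp_all add: field_simps)
  moreover have "sum P B \<ge> 0"
    using assms(1) by (simp add: is_distr_def sum_nonneg)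
  ultimately have compl_pos: "sum P (- B) > 0" and tv: "2 * (1 - sum P (- B)) \<le> 2 / r"
    using sum_Compl_distr[OF assms(1), of B] by auto
  have "1 \<le> K"
    using \<open>-1 \<le> c\<close> assms(4) by (simp add: K_def ge_one_powr_ge_zero)
  have \<alpha>_K: "\<alpha> * K = 1 - 1 / r"
    using assms(4) \<open>1 \<le> K\<close> by (simp add: \<alpha>_def field_simps)
  have "\<alpha> \<ge> 0"
    using assms(4) \<open>1 \<le> K\<close> by (simp add: \<alpha>_def)
  moreover have "\<alpha> * K < 1"
    using \<alpha>_K assms(4) by simp
  ultimately have "\<alpha> < 1"
    using \<open>1 \<le> K\<close> mult_left_mono[of 1 K \<alpha>] by linarith
  have "\<alpha> \<le> sum P (- B) / K"
    using \<alpha>_K \<open>1 \<le> K\<close> \<open>sum P B < 1 / r\<close> sum_Compl_distr[OF assms(1), of B]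
    by (simp add: field_simps)
  have "\<forall>i. \<alpha> * cond_distr P (- B) i \<le> Q i"
  proof
    fix i
    have "\<alpha> * cond_distr P (- B) i \<le> sum P (- B) / K * cond_distr P (- B) i"
      using \<open>\<alpha> \<le> sum P (- B) / K\<close> is_distr_cond_distr[OF assms(1) compl_pos]
      by (intro mult_right_mono) (simp_all add: is_distr_def)
    also have "\<dots> \<le> Q i"
      using assms(2) compl_pos \<open>1 \<le> K\<close>
      by (intro cond_distr_le_ratio_bound) (auto simp: B_def is_distr_def not_less)
    finally show "\<alpha> * cond_distr P (- B) i \<le> Q i" .
  qed
  then obtain P'' where "is_distr P''" "\<forall>i. Q i = \<alpha> * cond_distr P (- B) i + (1 - \<alpha>) * P'' i"
    using ex_mixture_decomposition[OF assms(2) is_distr_cond_distr[OF assms(1) compl_pos]]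
      \<open>\<alpha> < 1\<close> by blast
  thus ?thesis
    using is_distr_cond_distr[OF assms(1) compl_pos] tv_norm_cond_distr[OF assms(1) compl_pos] tv
    unfolding Let_def \<alpha>_def K_def by (intro exI[of _ "cond_distr P (- B)"] exI[of _ P'']) simp
qed

end
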